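(* Let $n>1$ be an odd integer and let $M$ be either $(n+1)/2$ or $n-1$. Then \[ \sum_{k=0}^{M}[4k-1]\frac{(aq^{-1},q^{-1}/a,q^{-1}/b,cq^{-1},dq^{-1},q^{-1};q^2)_k}{(q^2/a,aq^2,bq^2,q^2/c,q^2/d,q^2;q^2)_k}\bigg(\frac{bq^7}{cd}\bigg)^k \equiv0\pmod{\Phi_n(q)}. \]
   Context: Here $q,a,b,c,d$ are indeterminates. The $q$-shifted factorial is $(x;q)_0=1$, $(x;q)_k=(1-x)(1-xq)\cdots(1-xq^{k-1})$ for $k\ge1$, and $(x_1,\dots,x_m;q)_k=(x_1;q)_k\cdots(x_m;q)_k$. The $q$-integer is $[m]=(1-q^m)/(1-q)$, and $\Phi_n(q)$ is the $n$-th cyclotomic polynomial in $q$. A congruence $A\equiv B$ modulo a polynomial $P$ between rational functions means that $A-B$ is a rational function whose numerator is divisible by $P$ and whose denominator is coprime to $P$. *)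

theory Defs
  imports "HOL-Computational_Algebra.Computational_Algebra"
begin

text \<open>Cyclotomic polynomials over the integers, via X^n - 1 = prod over d dvd n of Phi_d.\<close>
function cyclo :: "nat \<Rightarrow> int poly" where
  "cyclo n = (if n = 0 then 1 else
      (monom 1 n - 1) div (\<Prod>d\<in>{d. d dvd n \<and> d < n}. cyclo d))"
  by auto
termination
  by (relation "measure id") auto

definition qpoch :: "'a::field \<Rightarrow> 'a \<Rightarrow> nat \<Rightarrow> 'a" where
  "qpoch x q k = (\<Prod>j<k. 1 - x * q ^ j)"

definition qint :: "'a::field \<Rightarrow> int \<Rightarrow> 'a" where
  "qint q m = (1 - q powi m) / (1 - q)"

definition cong_rf :: "'a::field poly fract \<Rightarrow> 'a poly fract \<Rightarrow> 'a poly \<Rightarrow> bool" where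
  "cong_rf A B P \<longleftrightarrow> (\<exists>N D. D \<noteq> 0 \<and> A - B = Fract N D \<and> P dvd N \<and> coprime D P)"

text \<open>Coefficient field K = Q(a,b,c,d) as fraction field of Q[d][c][b][a].\<close>
type_synonym coeffK = "rat poly poly poly poly fract"
type_synonym ratfun = "coeffK poly fract"

definition ind_a :: coeffK where "ind_a = to_fract [:0, 1:]"
definition ind_b :: coeffK where "ind_b = to_fract [:[:0, 1:]:]"
definition ind_c :: coeffK where "ind_c = to_fract [:[:[:0, 1:]:]:]"
definition ind_d :: coeffK where "ind_d = to_fract [:[:[:[:0, 1:]:]:]:]"

definition Q :: ratfun where "Q = to_fract [:0, 1:]"
definition A :: ratfun where "A = to_fract [:ind_a:]"
definition B :: ratfun where "B = to_fract [:ind_b:]"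
definition C :: ratfun where "C = to_fract [:ind_c:]"
definition D :: ratfun where "D = to_fract [:ind_d:]"

end

theory Submission
  imports Defs
begin

(* Work in the localisation of K[q] at Phi_n(q), i.e. with fractions whose denominator is coprime
   to Phi_n. There q^n = 1, and since n is odd, each denominator factor 1 - q^(2j+2)/x with
   j + 1 < n is a unit (x ranges over parameters with x^n <> 1 or x = 1), so the terms T(k) with
   k < n are integral. Put N = (n + 1)/2. Substituting j -> N - 1 - j in the numerator factors and
   using q^n = 1 gives the reflection T(N - k) = -T(k); hence the sum up to N is congruent to its
   own negative, i.e. to 0. For N < k < n the factor (1/q; q^2)_k contains 1 - q^(2N-1) = 1 - q^n,
   so these terms vanish. *)

section \<open>Bezout identities for polynomials over a field\<close>

lemma field_poly_common_divisor_combination: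
  fixes a b :: "'a::field poly"
  shows "\<exists>u v. (u * a + v * b) dvd a \<and> (u * a + v * b) dvd b"
proof (induction "if b = 0 then 0 else Suc (degree b)" arbitrary: a b rule: less_induct)
  case less
  show ?case
  proof (cases "b = 0")
    case True
    then show ?thesis by (intro exI[of _ 1] exI[of _ 0]) simp
  next
    case False
    have "(if a mod b = 0 then 0 else Suc (degree (a mod b))) < Suc (degree b)"
      using degree_mod_less[OF False, of a] by auto
    with False obtain u v where uv: "(u * b + v * (a mod b)) dvd b" "(u * b + v * (a mod b)) dvd a mod b"
      using less[of "a mod b" b] by auto
    have "(u * b + v * (a mod b)) dvd a div b * b + a mod b"
      using uv by (intro dvd_add dvd_mult) auto
    then have "(u * b + v * (a mod b)) dvd a" by simp
    moreover have "u * b + v * (a mod b) = v * a + (u - v * (a div b)) * b"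
      by (simp add: minus_div_mult_eq_mod [symmetric] algebra_simps)
    ultimately show ?thesis using uv(1) by (intro exI[of _ v] exI[of _ "u - v * (a div b)"]) simp
  qed
qed

lemma field_poly_coprime_imp_bezout:
  fixes a b :: "'a::field poly"
  assumes "coprime a b"
  shows "\<exists>u v. u * a + v * b = 1"
proof -
  obtain u v where "(u * a + v * b) dvd a" "(u * a + v * b) dvd b"
    using field_poly_common_divisor_combination by blast
  with assms have "is_unit (u * a + v * b)" by (auto simp: coprime_def)
  then obtain w where "1 = (u * a + v * b) * w" by (rule dvdE)
  then show ?thesis by (intro exI[of _ "w * u"] exI[of _ "w * v"]) (simp add: algebra_simps)
qed

lemma bezout_imp_coprime:
  fixes a b :: "'a::algebraic_semidom"
  assumes "u * a + v * b = 1"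
  shows "coprime a b"
proof (rule coprimeI)
  fix c assume "c dvd a" "c dvd b"
  then have "c dvd u * a + v * b" by simp
  with assms show "is_unit c" by simp
qed

lemma field_poly_coprime_mult_left:
  fixes a b c :: "'a::field poly"
  assumes "coprime a c" "coprime b c"
  shows "coprime (a * b) c"
proof -
  obtain u v where uv: "u * a + v * c = 1" using field_poly_coprime_imp_bezout assms(1) by blast
  obtain u' v' where uv': "u' * b + v' * c = 1" using field_poly_coprime_imp_bezout assms(2) by blast
  have "(u * u') * (a * b) + (u * a * v' + v * u' * b + v * v' * c) * c = (u * a + v * c) * (u' * b + v' * c)"
    by (simp add: algebra_simps)
  with uv uv' show ?thesis by (intro bezout_imp_coprime) simp
qed

lemma field_poly_coprime_prod_left:
  fixes f :: "'b \<Rightarrow> 'a::field poly"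
  shows "(\<And>i. i \<in> S \<Longrightarrow> coprime (f i) c) \<Longrightarrow> coprime (\<Prod>i\<in>S. f i) c"
  by (induction S rule: infinite_finite_induct) (auto intro: field_poly_coprime_mult_left)

lemma field_poly_coprime_mult_dvd:
  fixes a b c :: "'a::field poly"
  assumes "coprime a b" "a dvd c" "b dvd c"
  shows "a * b dvd c"
proof -
  obtain u v where uv: "u * a + v * b = 1" using field_poly_coprime_imp_bezout assms(1) by blast
  obtain k where k: "c = a * k" using assms(2) ..
  obtain l where l: "c = b * l" using assms(3) ..
  have "c = c * (u * a + v * b)" using uv by simp
  also have "\<dots> = u * a * c + v * b * c" by (simp add: algebra_simps)
  also have "\<dots> = (a * b) * (u * l + v * k)"
    by (subst (1) l, subst k) (simp add: algebra_simps)
  finally show ?thesis by (rule dvdI)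
qed

lemma field_poly_prod_dvd_pairwise_coprime:
  fixes f :: "'b \<Rightarrow> 'a::field poly"
  assumes "finite S" "\<And>i. i \<in> S \<Longrightarrow> f i dvd c"
    and "\<And>i j. i \<in> S \<Longrightarrow> j \<in> S \<Longrightarrow> i \<noteq> j \<Longrightarrow> coprime (f i) (f j)"
  shows "(\<Prod>i\<in>S. f i) dvd c"
  using assms
proof (induction S rule: finite_induct)
  case (insert i S)
  have "coprime (f i) (\<Prod>j\<in>S. f j)"
    using insert.hyps(2) insert.prems(2)
    by (subst coprime_commute) (intro field_poly_coprime_prod_left, metis insertI1 insertI2)
  with insert show ?case by (simp add: field_poly_coprime_mult_dvd)
qed simp

section \<open>Cyclotomic polynomials\<close>

declare cyclo.simps [simp del]

definition unity_poly :: "nat \<Rightarrow> 'a::comm_ring_1 poly" where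
  "unity_poly n = monom 1 n - 1"

lemma map_poly_of_int_mult:
  "map_poly (of_int :: int \<Rightarrow> 'a::comm_ring_1) (p * q) = map_poly of_int p * map_poly of_int q"
  by (intro poly_eqI) (simp add: coeff_map_poly coeff_mult)

lemma map_poly_of_int_prod:
  "map_poly (of_int :: int \<Rightarrow> 'a::comm_ring_1) (\<Prod>i\<in>S. f i) = (\<Prod>i\<in>S. map_poly of_int (f i))"
  by (induction S rule: infinite_finite_induct) (simp_all add: map_poly_of_int_mult)

lemma map_poly_of_int_unity_poly [simp]:
  "map_poly (of_int :: int \<Rightarrow> 'a::comm_ring_1) (unity_poly n) = unity_poly n"
  by (intro poly_eqI) (simp add: coeff_map_poly unity_poly_def coeff_monom)

lemma lead_coeff_unity_poly:
  assumes "0 < n"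
  shows "lead_coeff (unity_poly n :: 'a::comm_ring_1 poly) = 1"
proof -
  have "degree (-1 :: 'a poly) < degree (monom (1::'a) n)"
    using assms by (simp add: degree_monom_eq)
  then show ?thesis
    unfolding unity_poly_def diff_conv_add_uminus by (metis lead_coeff_add_le add.commute lead_coeff_monom)
qed

lemma unity_poly_dvd:
  assumes "d dvd n"
  shows "(unity_poly d :: 'a::comm_ring_1 poly) dvd unity_poly n"
proof -
  obtain k where "n = d * k" using assms ..
  then have "unity_poly n = (monom (1::'a) d) ^ k - 1" by (simp add: unity_poly_def monom_power)
  then show ?thesis by (simp add: power_diff_1_eq unity_poly_def)
qed

lemma unity_poly_dvd_gcd:
  fixes h :: "'a::comm_ring_1 poly"
  shows "h dvd unity_poly m \<Longrightarrow> h dvd unity_poly n \<Longrightarrow> h dvd unity_poly (gcd m n)"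
proof (induction m n rule: gcd_nat_induct)
  case (step m n)
  have "unity_poly (m div n * n + m mod n) =
      monom 1 (m mod n) * unity_poly (m div n * n) + (unity_poly (m mod n) :: 'a poly)"
    by (simp add: unity_poly_def algebra_simps mult_monom)
  then have "unity_poly m = monom 1 (m mod n) * unity_poly (m div n * n) + (unity_poly (m mod n) :: 'a poly)"
    by simp
  moreover have "h dvd unity_poly (m div n * n)"
    using step.prems(2) unity_poly_dvd[of n "m div n * n"] by (auto intro: dvd_trans)
  ultimately have "h dvd unity_poly (m mod n)"
    using step.prems(1) by (simp add: dvd_add_right_iff)
  with step show ?case by (simp add: gcd_non_0_nat)
qed simp

lemma unity_poly_squarefree:
  fixes h :: "'a::field poly"
  assumes "h * h dvd unity_poly n" and "of_nat n \<noteq> (0::'a)"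
  shows "is_unit h"
proof -
  obtain g where g: "unity_poly n = h * h * g" using assms(1) ..
  have "n \<noteq> 0" using assms(2) by (intro notI) simp
  have "pderiv (h * h * g) = h * (h * pderiv g + 2 * g * pderiv h)"
    by (simp add: pderiv_mult algebra_simps)
  moreover have "pderiv (unity_poly n :: 'a poly) = monom (of_nat n) (n - 1)"
    by (simp add: unity_poly_def pderiv_diff pderiv_monom)
  ultimately have "h dvd monom (of_nat n) (n - 1)"
    using g by (metis dvd_triv_left)
  then have "h dvd monom (of_nat n) (n - 1) * monom 1 1"
    by (rule dvd_mult2)
  then have "h dvd monom (of_nat n) n"
    using \<open>n \<noteq> 0\<close> by (simp add: mult_monom)
  moreover have "h dvd smult (of_nat n) (unity_poly n)"
    using g by (simp add: dvd_smult)
  ultimately have "h dvd monom (of_nat n) n - smult (of_nat n) (unity_poly n)"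
    by (rule dvd_diff)
  also have "monom (of_nat n) n - smult (of_nat n) (unity_poly n) = [:of_nat n:]"
    by (simp add: unity_poly_def smult_diff_right smult_monom)
  finally have "h dvd [:of_nat n:]" .
  moreover have "is_unit [:(of_nat n :: 'a):]"
    using assms(2) by (simp add: is_unit_const_poly_iff dvd_field_iff)
  ultimately show ?thesis by (rule dvd_unit_imp_unit)
qed

lemma prod_divisors_split:
  assumes "0 < (n::nat)"
  shows "(\<Prod>d | d dvd n. f d) = f n * (\<Prod>d | d dvd n \<and> d < n. f d)"
proof -
  have "{d. d dvd n} = insert n {d. d dvd n \<and> d < n}"
    using assms by (auto dest: dvd_imp_le)
  then show ?thesis by simp
qed

lemma divisors_subset_proper_divisors:
  assumes "g dvd n" "0 < g" "g < (n::nat)"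
  shows "{d. d dvd g} \<subseteq> {d. d dvd n \<and> d < n}"
  using assms by (auto intro: dvd_trans dest: dvd_imp_le)

(* A common factor h of phi n and X^m - 1 divides X^gcd(m,n) - 1, hence the product of the
   phi d over the proper divisors d of n; so h^2 divides X^n - 1, which is squarefree. *)
lemma coprime_factor_unity_poly:
  fixes \<phi> :: "nat \<Rightarrow> 'a::field poly"
  assumes prod: "\<And>d. 0 < d \<Longrightarrow> d \<le> n \<Longrightarrow> (\<Prod>e | e dvd d. \<phi> e) = unity_poly d"
    and "0 < n" "of_nat n \<noteq> (0::'a)" "0 < m" "\<not> n dvd m"
  shows "coprime (\<phi> n) (unity_poly m)"
proof (rule coprimeI)
  fix h assume h: "h dvd \<phi> n" "h dvd unity_poly m"
  define g where "g = gcd m n"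
  have "0 < g" "g dvd n" using \<open>0 < m\<close> by (simp_all add: g_def)
  moreover have "g \<noteq> n"
    using \<open>\<not> n dvd m\<close> unfolding g_def by (metis gcd_dvd1)
  then have "g < n"
    using \<open>0 < n\<close> \<open>g dvd n\<close> by (simp add: dvd_imp_le le_neq_implies_less)
  ultimately have g_prod: "(\<Prod>e | e dvd g. \<phi> e) dvd (\<Prod>e | e dvd n \<and> e < n. \<phi> e)"
    by (intro prod_dvd_prod_subset divisors_subset_proper_divisors) auto
  have n_split: "\<phi> n * (\<Prod>e | e dvd n \<and> e < n. \<phi> e) = unity_poly n"
    using prod[of n] \<open>0 < n\<close> by (simp add: prod_divisors_split)
  then have "h dvd unity_poly n" using h(1) by (metis dvd_mult2 dvd_trans dvd_refl)
  with h(2) have "h dvd unity_poly g" unfolding g_def by (rule unity_poly_dvd_gcd)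
  also have "unity_poly g = (\<Prod>e | e dvd g. \<phi> e)"
    using prod[of g] \<open>0 < g\<close> \<open>g < n\<close> by simp
  finally have "h dvd (\<Prod>e | e dvd n \<and> e < n. \<phi> e)"
    using g_prod by (rule dvd_trans)
  with h(1) have "h * h dvd unity_poly n"
    unfolding n_split[symmetric] by (rule mult_dvd_mono)
  then show "is_unit h" using \<open>of_nat n \<noteq> 0\<close> by (rule unity_poly_squarefree)
qed

(* Gives the coefficient field coeffK = Q(a,b,c,d), a fraction field, the class field_char_0. *)
instance fract :: ("{idom,ring_char_0}") ring_char_0
  by standard (auto intro!: injI simp: of_nat_fract eq_fract)

instance fract :: ("{idom,ring_char_0}") field_char_0 ..

lemma of_int_fract_eq_to_fract: "(of_int k :: int fract) = to_fract k"
  by (cases k rule: int_diff_cases) (simp add: of_nat_fract to_fract_def)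

abbreviation cyclo_poly :: "nat \<Rightarrow> 'a::comm_ring_1 poly" where
  "cyclo_poly n \<equiv> map_poly of_int (cyclo n)"

lemma lead_coeff_proper_cyclo_prod:
  assumes "\<And>d. 0 < d \<Longrightarrow> d < n \<Longrightarrow> lead_coeff (cyclo d) = 1"
  shows "lead_coeff (\<Prod>d | d dvd n \<and> d < n. cyclo d) = 1"
  unfolding lead_coeff_prod using assms by (intro prod.neutral) (auto intro: Nat.gr0I)

lemma proper_factor_prod_dvd_unity_poly:
  fixes \<phi> :: "nat \<Rightarrow> 'a::field_char_0 poly"
  assumes "0 < n" and prod: "\<And>d. 0 < d \<Longrightarrow> d < n \<Longrightarrow> (\<Prod>e | e dvd d. \<phi> e) = unity_poly d"
  shows "(\<Prod>d | d dvd n \<and> d < n. \<phi> d) dvd unity_poly n"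
proof -
  define S where "S = {d. d dvd n \<and> d < n}"
  have S_pos: "0 < d" "d < n" if "d \<in> S" for d
    using that \<open>0 < n\<close> by (auto simp: S_def intro: Nat.gr0I)
  have \<phi>_dvd: "\<phi> d dvd unity_poly d" if "d \<in> S" for d
  proof -
    have "unity_poly d = \<phi> d * (\<Prod>e | e dvd d \<and> e < d. \<phi> e)"
      using prod[OF S_pos[OF that]] S_pos[OF that] by (simp add: prod_divisors_split)
    then show ?thesis by (rule dvdI)
  qed
  have coprime_\<phi>: "coprime (\<phi> d1) (\<phi> d2)" if "d1 \<in> S" "d2 \<in> S" "\<not> d1 dvd d2" for d1 d2
  proof -
    have "coprime (\<phi> d1) (unity_poly d2)"
      using that S_pos[OF that(1)] S_pos[OF that(2)]
      by (intro coprime_factor_unity_poly[where n = d1] prod) auto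
    with \<phi>_dvd[OF that(2)] show ?thesis by (rule coprime_divisors[OF dvd_refl])
  qed
  show ?thesis
    unfolding S_def[symmetric]
  proof (rule field_poly_prod_dvd_pairwise_coprime)
    show "finite S" unfolding S_def by simp
    show "\<phi> d dvd unity_poly n" if "d \<in> S" for d
      using \<phi>_dvd[OF that] unity_poly_dvd[of d n] that by (auto simp: S_def intro: dvd_trans)
    show "coprime (\<phi> d1) (\<phi> d2)" if "d1 \<in> S" "d2 \<in> S" "d1 \<noteq> d2" for d1 d2
    proof (cases "d1 dvd d2")
      case True
      with \<open>d1 \<noteq> d2\<close> have "\<not> d2 dvd d1" by (auto dest: dvd_antisym)
      with that coprime_\<phi>[of d2 d1] show ?thesis by (simp add: coprime_commute)
    qed (use that coprime_\<phi> in blast)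
  qed
qed

(* The divisibility is obtained over Q and descends to Z by Gauss's lemma, the product being monic. *)
lemma proper_cyclo_prod_dvd_unity_poly:
  assumes "0 < n"
    and IH: "\<And>d. 0 < d \<Longrightarrow> d < n \<Longrightarrow>
      (\<Prod>e | e dvd d. cyclo e) = unity_poly d \<and> lead_coeff (cyclo d) = 1"
  shows "(\<Prod>d | d dvd n \<and> d < n. cyclo d) dvd unity_poly n"
proof -
  define \<Psi> where "\<Psi> = (\<Prod>d | d dvd n \<and> d < n. cyclo d)"
  have "(\<Prod>d | d dvd n \<and> d < n. cyclo_poly d :: int fract poly) dvd unity_poly n"
    using IH \<open>0 < n\<close> by (intro proper_factor_prod_dvd_unity_poly) (simp_all flip: map_poly_of_int_prod)
  moreover have "fract_poly p = map_poly of_int p" for p :: "int poly"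
    by (simp add: of_int_fract_eq_to_fract[abs_def])
  ultimately have "fract_poly \<Psi> dvd fract_poly (unity_poly n)"
    by (simp add: \<Psi>_def map_poly_of_int_prod)
  moreover have "content \<Psi> = 1"
  proof -
    have "lead_coeff \<Psi> = 1"
      unfolding \<Psi>_def using IH by (intro lead_coeff_proper_cyclo_prod) blast
    then have "is_unit (content \<Psi>)"
      using content_dvd_coeff[of \<Psi> "degree \<Psi>"] by simp
    then show ?thesis using is_unit_normalize normalize_content by metis
  qed
  ultimately show ?thesis unfolding \<Psi>_def by (rule fract_poly_dvdD)
qed

lemma cyclo_prod_divisors_and_monic:
  "0 < n \<Longrightarrow> (\<Prod>d | d dvd n. cyclo d) = unity_poly n \<and> lead_coeff (cyclo n) = 1"
proof (induction n rule: less_induct)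
  case (less n)
  define \<Psi> where "\<Psi> = (\<Prod>d | d dvd n \<and> d < n. cyclo d)"
  have "\<Psi> dvd unity_poly n"
    unfolding \<Psi>_def using less by (intro proper_cyclo_prod_dvd_unity_poly) auto
  then obtain G where G: "unity_poly n = \<Psi> * G" ..
  have "lead_coeff \<Psi> = 1"
    unfolding \<Psi>_def using less by (intro lead_coeff_proper_cyclo_prod) auto
  then have "\<Psi> \<noteq> 0" by auto
  have "cyclo n = unity_poly n div \<Psi>"
    using less.prems by (subst cyclo.simps) (simp add: unity_poly_def \<Psi>_def)
  with G \<open>\<Psi> \<noteq> 0\<close> have "cyclo n = G" by simp
  have "(\<Prod>d | d dvd n. cyclo d) = unity_poly n"
    using less.prems G by (simp add: prod_divisors_split \<open>cyclo n = G\<close> \<Psi>_def mult.commute)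
  moreover have "lead_coeff (cyclo n) = 1"
    using lead_coeff_unity_poly[OF less.prems, where 'a = int] G \<open>cyclo n = G\<close> \<open>lead_coeff \<Psi> = 1\<close>
    by (simp add: lead_coeff_mult)
  ultimately show ?case ..
qed

lemma cyclo_poly_prod_divisors:
  assumes "0 < n"
  shows "(\<Prod>d | d dvd n. cyclo_poly d) = (unity_poly n :: 'a::comm_ring_1 poly)"
  using cyclo_prod_divisors_and_monic[OF assms]
  by (metis map_poly_of_int_prod map_poly_of_int_unity_poly)

lemma cyclo_poly_dvd_unity_poly:
  assumes "0 < n"
  shows "cyclo_poly n dvd (unity_poly n :: 'a::comm_ring_1 poly)"
proof -
  have "cyclo_poly n * (\<Prod>d | d dvd n \<and> d < n. cyclo_poly d :: 'a poly) = unity_poly n"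
    using cyclo_poly_prod_divisors[OF assms] assms by (simp add: prod_divisors_split)
  then show ?thesis by (metis dvd_triv_left)
qed

lemma coprime_cyclo_poly_unity_poly:
  assumes "0 < n" "0 < m" "\<not> n dvd m"
  shows "coprime (cyclo_poly n) (unity_poly m :: 'a::field_char_0 poly)"
  using assms by (intro coprime_factor_unity_poly cyclo_poly_prod_divisors) auto

section \<open>Congruences in the localisation at a polynomial\<close>

(* integral_mod P x: x lies in the localisation of K[q] at P, and cong_rf x y P says that x - y
   lies in the ideal generated by P there. *)
definition integral_mod :: "'a::field poly \<Rightarrow> 'a poly fract \<Rightarrow> bool" where
  "integral_mod P x \<longleftrightarrow> (\<exists>N D. D \<noteq> 0 \<and> coprime D P \<and> x = Fract N D)"

definition unit_mod :: "'a::field poly \<Rightarrow> 'a poly fract \<Rightarrow> bool" where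
  "unit_mod P x \<longleftrightarrow> x \<noteq> 0 \<and> integral_mod P x \<and> integral_mod P (inverse x)"

lemma integral_mod_to_fract [simp]: "integral_mod P (to_fract N)"
  unfolding integral_mod_def to_fract_def by (intro exI[of _ N] exI[of _ 1]) simp

lemma integral_mod_1 [simp]: "integral_mod P 1"
  using integral_mod_to_fract[of P 1] by simp

lemma integral_mod_add:
  assumes "integral_mod P x" "integral_mod P y"
  shows "integral_mod P (x + y)"
proof -
  obtain N D N' D' where "D \<noteq> 0" "coprime D P" "x = Fract N D" "D' \<noteq> 0" "coprime D' P" "y = Fract N' D'"
    using assms unfolding integral_mod_def by blast
  then show ?thesis
    unfolding integral_mod_def
    by (intro exI[of _ "N * D' + N' * D"] exI[of _ "D * D'"]) (simp add: field_poly_coprime_mult_left)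
qed

lemma integral_mod_mult:
  assumes "integral_mod P x" "integral_mod P y"
  shows "integral_mod P (x * y)"
proof -
  obtain N D N' D' where "D \<noteq> 0" "coprime D P" "x = Fract N D" "D' \<noteq> 0" "coprime D' P" "y = Fract N' D'"
    using assms unfolding integral_mod_def by blast
  then show ?thesis
    unfolding integral_mod_def
    by (intro exI[of _ "N * N'"] exI[of _ "D * D'"]) (simp add: field_poly_coprime_mult_left)
qed

lemma integral_mod_uminus: "integral_mod P x \<Longrightarrow> integral_mod P (- x)"
  using integral_mod_mult[of P "- 1" x] integral_mod_to_fract[of P "- 1"] by simp

lemma integral_mod_diff: "integral_mod P x \<Longrightarrow> integral_mod P y \<Longrightarrow> integral_mod P (x - y)"
  using integral_mod_add[of P x "- y"] integral_mod_uminus[of P y] by simp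

lemma integral_mod_prod:
  "(\<And>i. i \<in> S \<Longrightarrow> integral_mod P (f i)) \<Longrightarrow> integral_mod P (\<Prod>i\<in>S. f i)"
  by (induction S rule: infinite_finite_induct) (auto intro: integral_mod_mult)

lemma integral_mod_power: "integral_mod P x \<Longrightarrow> integral_mod P (x ^ k)"
  by (induction k) (auto intro: integral_mod_mult)

lemma unit_mod_Fract:
  fixes N D :: "'a::field poly"
  assumes "N \<noteq> 0" "D \<noteq> 0" "coprime N P" "coprime D P"
  shows "unit_mod P (Fract N D)"
  using assms unfolding unit_mod_def integral_mod_def by (auto simp: eq_fract Zero_fract_def)

lemma unit_mod_imp_integral: "unit_mod P x \<Longrightarrow> integral_mod P x"
  and unit_mod_imp_integral_inverse: "unit_mod P x \<Longrightarrow> integral_mod P (inverse x)"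
  by (simp_all add: unit_mod_def)

lemma unit_mod_1 [simp]: "unit_mod P 1"
  by (simp add: unit_mod_def)

lemma unit_mod_mult: "unit_mod P x \<Longrightarrow> unit_mod P y \<Longrightarrow> unit_mod P (x * y)"
  unfolding unit_mod_def by (auto intro: integral_mod_mult)

lemma unit_mod_inverse: "unit_mod P x \<Longrightarrow> unit_mod P (inverse x)"
  unfolding unit_mod_def by auto

lemma unit_mod_uminus: "unit_mod P x \<Longrightarrow> unit_mod P (- x)"
  unfolding unit_mod_def by (auto intro: integral_mod_uminus simp: inverse_minus_eq)

lemma unit_mod_power: "unit_mod P x \<Longrightarrow> unit_mod P (x ^ k)"
  by (induction k) (auto intro: unit_mod_mult)

lemma unit_mod_power_int: "unit_mod P x \<Longrightarrow> unit_mod P (x powi k)"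
  by (cases "0 \<le> k") (auto simp: power_int_def intro: unit_mod_power unit_mod_inverse)

lemma unit_mod_prod:
  "(\<And>i. i \<in> S \<Longrightarrow> unit_mod P (f i)) \<Longrightarrow> unit_mod P (\<Prod>i\<in>S. f i)"
  by (induction S rule: infinite_finite_induct) (auto intro: unit_mod_mult)

lemma integral_mod_divide: "integral_mod P x \<Longrightarrow> unit_mod P y \<Longrightarrow> integral_mod P (x / y)"
  by (simp add: divide_inverse integral_mod_mult unit_mod_def)

lemma cong_rf_iff_diff: "cong_rf x y P \<longleftrightarrow> cong_rf (x - y) 0 P"
  by (simp add: cong_rf_def)

lemma cong_rf_refl [simp]: "cong_rf x x P"
  unfolding cong_rf_def by (intro exI[of _ 0] exI[of _ 1]) (simp add: Zero_fract_def)

lemma cong_rf_to_fract: "P dvd N \<Longrightarrow> cong_rf (to_fract N) 0 P"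
  unfolding cong_rf_def to_fract_def by (intro exI[of _ N] exI[of _ 1]) simp

lemma cong_rf_zero_imp_integral: "cong_rf x 0 P \<Longrightarrow> integral_mod P x"
  unfolding cong_rf_def integral_mod_def by auto

lemma cong_rf_add:
  assumes "cong_rf x x' P" "cong_rf y y' P"
  shows "cong_rf (x + y) (x' + y') P"
proof -
  obtain N D N' D' where "D \<noteq> 0" "coprime D P" "P dvd N" "x - x' = Fract N D"
    and "D' \<noteq> 0" "coprime D' P" "P dvd N'" "y - y' = Fract N' D'"
    using assms unfolding cong_rf_def by blast
  moreover have "x + y - (x' + y') = (x - x') + (y - y')" by simp
  ultimately show ?thesis
    unfolding cong_rf_def
    by (intro exI[of _ "N * D' + N' * D"] exI[of _ "D * D'"]) (simp add: field_poly_coprime_mult_left)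
qed

lemma cong_rf_zero_mult:
  assumes "cong_rf x 0 P" "integral_mod P y"
  shows "cong_rf (x * y) 0 P"
proof -
  obtain N D N' D' where "D \<noteq> 0" "coprime D P" "P dvd N" "x = Fract N D"
    and "D' \<noteq> 0" "coprime D' P" "y = Fract N' D'"
    using assms unfolding cong_rf_def integral_mod_def by auto
  then show ?thesis
    unfolding cong_rf_def
    by (intro exI[of _ "N * N'"] exI[of _ "D * D'"]) (simp add: field_poly_coprime_mult_left)
qed

lemma cong_rf_uminus: "cong_rf x y P \<Longrightarrow> cong_rf (- x) (- y) P"
  using cong_rf_zero_mult[of "x - y" P "- 1"] integral_mod_to_fract[of P "- 1"]
  by (simp add: cong_rf_iff_diff[of "- x"] cong_rf_iff_diff[of x] algebra_simps)

lemma cong_rf_diff: "cong_rf x x' P \<Longrightarrow> cong_rf y y' P \<Longrightarrow> cong_rf (x - y) (x' - y') P"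
  using cong_rf_add[of x x' P "- y" "- y'"] cong_rf_uminus[of y y' P] by simp

lemma cong_rf_sym: "cong_rf x y P \<Longrightarrow> cong_rf y x P"
  using cong_rf_uminus[of "x - y" 0 P] by (simp add: cong_rf_iff_diff[of x] cong_rf_iff_diff[of y])

lemma cong_rf_trans: "cong_rf x y P \<Longrightarrow> cong_rf y z P \<Longrightarrow> cong_rf x z P"
  using cong_rf_add[of "x - y" 0 P "y - z" 0]
  by (simp add: cong_rf_iff_diff[of x] cong_rf_iff_diff[of y])

declare cong_rf_trans [trans]

lemma cong_rf_sum:
  "(\<And>i. i \<in> S \<Longrightarrow> cong_rf (f i) (g i) P) \<Longrightarrow> cong_rf (\<Sum>i\<in>S. f i) (\<Sum>i\<in>S. g i) P"
  by (induction S rule: infinite_finite_induct) (auto intro: cong_rf_add)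

lemma cong_rf_integral: "cong_rf x y P \<Longrightarrow> integral_mod P y \<Longrightarrow> integral_mod P x"
  using integral_mod_add[of P "x - y" y] cong_rf_zero_imp_integral by (force simp: cong_rf_iff_diff[of x])

lemma cong_rf_mult:
  assumes "cong_rf x x' P" "cong_rf y y' P" "integral_mod P x" "integral_mod P y'"
  shows "cong_rf (x * y) (x' * y') P"
proof -
  have "cong_rf ((y - y') * x + (x - x') * y') (0 + 0) P"
    using assms(1,2)[THEN cong_rf_iff_diff[THEN iffD1]] assms(3,4)
    by (intro cong_rf_add cong_rf_zero_mult)
  then show ?thesis by (simp add: cong_rf_iff_diff[of "x * y"] algebra_simps)
qed

lemma cong_rf_prod:
  assumes "\<And>i. i \<in> S \<Longrightarrow> cong_rf (f i) (g i) P"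
    and "\<And>i. i \<in> S \<Longrightarrow> integral_mod P (g i)"
  shows "cong_rf (\<Prod>i\<in>S. f i) (\<Prod>i\<in>S. g i) P"
  using assms
proof (induction S rule: infinite_finite_induct)
  case (insert i S)
  then have "cong_rf (f i * prod f S) (g i * prod g S) P"
    by (intro cong_rf_mult cong_rf_integral[of "f i" "g i"] integral_mod_prod) auto
  with insert.hyps show ?case by simp
qed simp_all

lemma cong_rf_power: "cong_rf x y P \<Longrightarrow> integral_mod P y \<Longrightarrow> cong_rf (x ^ k) (y ^ k) P"
  using cong_rf_prod[of "{..<k}" "\<lambda>_. x" "\<lambda>_. y" P] by simp

lemma cong_rf_inverse:
  assumes "cong_rf x y P" "unit_mod P x" "unit_mod P y"
  shows "cong_rf (inverse x) (inverse y) P"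
proof -
  have "cong_rf ((y - x) * (inverse x * inverse y)) 0 P"
    using cong_rf_sym[OF assms(1), THEN cong_rf_iff_diff[THEN iffD1]] assms(2,3)
    by (intro cong_rf_zero_mult integral_mod_mult unit_mod_imp_integral_inverse)
  moreover have "(y - x) * (inverse x * inverse y) = inverse x - inverse y"
    using assms(2,3) by (simp add: unit_mod_def field_simps)
  ultimately show ?thesis by (simp add: cong_rf_iff_diff[of "inverse x"])
qed

section \<open>Powers of q modulo a divisor of q^n - 1\<close>

definition qvar :: "'a::idom poly fract" where
  "qvar = to_fract [:0, 1:]"

definition qconst :: "'a::idom \<Rightarrow> 'a poly fract" where
  "qconst c = to_fract [:c:]"

lemma qvar_nonzero [simp]: "qvar \<noteq> 0"
  by (simp add: qvar_def)

lemma to_fract_power: "to_fract (x ^ m) = to_fract x ^ m"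
  by (induction m) simp_all

lemma qvar_power: "qvar ^ m = to_fract (monom 1 m)"
  by (simp add: qvar_def monom_altdef to_fract_power)

lemma qconst_mult_qvar_power: "qconst c * qvar ^ m = to_fract (monom c m)"
proof -
  have "[:c:] * monom 1 m = monom c m" by (simp add: smult_monom)
  then show ?thesis by (simp only: qconst_def qvar_power to_fract_mult[symmetric])
qed

lemma qconst_0 [simp]: "qconst 0 = 0"
  and qconst_1 [simp]: "qconst 1 = 1"
  and qconst_eq_0_iff [simp]: "qconst c = 0 \<longleftrightarrow> c = 0"
  by (simp_all add: qconst_def pCons_one)

lemma qconst_mult: "qconst (a * b) = qconst a * qconst b"
  unfolding qconst_def mult_to_poly[symmetric] by (rule to_fract_mult)

lemma qconst_inverse: "qconst (inverse c) = inverse (qconst (c :: 'a::field))"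
proof (cases "c = 0")
  case False
  then have "qconst (inverse c) * qconst c = 1" by (simp flip: qconst_mult)
  with False show ?thesis by (simp add: field_simps)
qed simp

lemma integral_mod_qconst: "integral_mod P (qconst c)"
  by (simp add: qconst_def)

lemma unit_mod_qconst: "c \<noteq> 0 \<Longrightarrow> unit_mod P (qconst c)"
  unfolding qconst_def to_fract_def
  by (intro unit_mod_Fract is_unit_left_imp_coprime) (simp_all add: is_unit_const_poly_iff dvd_field_iff)

context
  fixes P :: "'a::field poly" and n :: nat
  assumes P_dvd: "P dvd unity_poly n" and n_pos: "0 < n"
begin

lemma unit_mod_qvar: "unit_mod P qvar"
proof -
  obtain w where w: "unity_poly n = P * w" using P_dvd by (rule dvdE)
  have "[:0, 1:] * monom 1 (n - 1) = (monom 1 n :: 'a poly)"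
    using n_pos by (cases n) (simp_all add: monom_Suc)
  then have "monom 1 (n - 1) * [:0, 1:] + (- w) * P = 1"
    using w by (simp add: unity_poly_def algebra_simps)
  then have "coprime [:0, 1:] P" by (rule bezout_imp_coprime)
  then show ?thesis unfolding qvar_def to_fract_def by (intro unit_mod_Fract) simp_all
qed

lemma integral_mod_qvar_power_int: "integral_mod P (qvar powi e)"
  by (intro unit_mod_imp_integral unit_mod_power_int unit_mod_qvar)

lemma cong_rf_qvar_power_int_period: "cong_rf ((qvar ^ n) powi t) 1 P"
proof -
  have "(qvar :: 'a poly fract) ^ n - 1 = to_fract (unity_poly n)" by (simp add: qvar_power unity_poly_def)
  then have base: "cong_rf (qvar ^ n) 1 P"
    using cong_rf_to_fract[OF P_dvd] by (simp only: cong_rf_iff_diff[of "qvar ^ n"])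
  show ?thesis
  proof (cases "0 \<le> t")
    case True
    then show ?thesis using cong_rf_power[OF base, of "nat t"] by (simp add: power_int_def)
  next
    case False
    have "cong_rf (inverse ((qvar ^ n) ^ nat (- t))) (inverse (1 ^ nat (- t))) P"
      using base by (intro cong_rf_inverse cong_rf_power unit_mod_power unit_mod_qvar) simp_all
    with False show ?thesis by (simp add: power_int_def power_inverse)
  qed
qed

lemma cong_rf_qvar_power_int:
  assumes "int n dvd a - b"
  shows "cong_rf (qvar powi a) (qvar powi b) P"
proof -
  obtain t where "a = b + int n * t" using assms by (metis dvd_def add_diff_cancel_left' diff_add_cancel)
  then have "(qvar :: 'a poly fract) powi a = qvar powi b * (qvar ^ n) powi t"
    by (simp add: power_int_add power_int_mult)
  moreover have "cong_rf (qvar powi b * (qvar ^ n) powi t) (qvar powi b * 1) P"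
    by (intro cong_rf_mult cong_rf_qvar_power_int_period integral_mod_qvar_power_int) simp_all
  ultimately show ?thesis by (simp only: mult_1_right)
qed

lemma unit_mod_one_minus_qconst_qvar_power:
  assumes c: "c ^ n \<noteq> 1"
  shows "unit_mod P (1 - qconst c * qvar ^ m)"
proof -
  define y where "y = (monom c m :: 'a poly)"
  obtain s where s: "y ^ n - 1 = (y - 1) * s"
    using power_diff_1_eq[of y n] by blast
  obtain t where t: "unity_poly (m * n) = unity_poly n * (t :: 'a poly)"
    using unity_poly_dvd[of n "m * n"] by (auto elim: dvdE)
  obtain w where w: "unity_poly n = P * w" using P_dvd by (rule dvdE)
  define K where "K = [:inverse (c ^ n - 1):]"
  have "y ^ n = smult (c ^ n) (unity_poly (m * n) + 1)"
    by (simp add: y_def monom_power smult_monom unity_poly_def mult.commute)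
  also have "\<dots> = smult (c ^ n) (P * w * t) + [:c ^ n:]"
    by (simp add: t w smult_add_right)
  moreover have "[:c ^ n - 1:] = [:c ^ n:] - 1"
    by (rule poly_eqI) (simp add: coeff_pCons split: nat.split)
  ultimately have "[:c ^ n - 1:] = y ^ n - 1 - smult (c ^ n) (P * w * t)"
    by simp
  also have "\<dots> = (y - 1) * s - smult (c ^ n) (P * w * t)"
    by (simp only: s)
  finally have E: "[:c ^ n - 1:] = (y - 1) * s - smult (c ^ n) (P * w * t)" .
  have "1 = K * [:c ^ n - 1:]"
    using c by (simp add: K_def pCons_one)
  also have "\<dots> = (- (K * s)) * (1 - y) + (- (K * smult (c ^ n) (w * t))) * P"
    by (subst E) (simp add: algebra_simps)
  finally have "(- (K * s)) * (1 - y) + (- (K * smult (c ^ n) (w * t))) * P = 1" ..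
  then have "coprime (1 - y) P" by (rule bezout_imp_coprime)
  moreover have "1 - y \<noteq> 0"
    using c by (auto simp: y_def monom_eq_1_iff)
  moreover have "1 - qconst c * qvar ^ m = to_fract (1 - y)"
    by (simp add: y_def qconst_mult_qvar_power)
  ultimately show ?thesis by (simp add: unit_mod_Fract to_fract_def)
qed

end

lemma unit_mod_one_minus_qvar_power:
  assumes "0 < n" "0 < m" "\<not> n dvd m"
  shows "unit_mod (cyclo_poly n) (1 - qvar ^ m :: 'a::field_char_0 poly fract)"
proof -
  have "coprime (unity_poly m) (cyclo_poly n :: 'a poly)"
    using coprime_cyclo_poly_unity_poly[OF assms] by (simp add: coprime_commute)
  moreover have "unity_poly m \<noteq> (0 :: 'a poly)"
    using lead_coeff_unity_poly[OF assms(2), where 'a = 'a] by auto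
  ultimately have "unit_mod (cyclo_poly n) (- to_fract (unity_poly m :: 'a poly))"
    unfolding to_fract_def by (intro unit_mod_uminus unit_mod_Fract) simp_all
  then show ?thesis by (simp add: qvar_power unity_poly_def)
qed

lemma unit_mod_one_minus_qconst_qvar_power_int:
  fixes c :: "'a::field_char_0"
  assumes "0 < n" "c \<noteq> 0" and c: "c ^ n \<noteq> 1 \<or> c = 1 \<and> \<not> int n dvd e"
  shows "unit_mod (cyclo_poly n) (1 - qconst c * qvar powi e)"
proof -
  have unit_pos: "unit_mod (cyclo_poly n) (1 - qconst c' * qvar ^ m)"
    if "c' ^ n \<noteq> 1 \<or> c' = 1 \<and> \<not> n dvd m" for c' :: 'a and m
  proof (cases "c' ^ n \<noteq> 1")
    case True
    then show ?thesis using cyclo_poly_dvd_unity_poly \<open>0 < n\<close>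
      by (intro unit_mod_one_minus_qconst_qvar_power) auto
  next
    case False
    with that have "c' = 1" "\<not> n dvd m" "0 < m" by (auto intro: Nat.gr0I)
    with \<open>0 < n\<close> show ?thesis by (simp add: unit_mod_one_minus_qvar_power)
  qed
  show ?thesis
  proof (cases "0 \<le> e")
    case True
    then obtain m where "e = int m" by (metis nonneg_eq_int)
    with c show ?thesis using unit_pos[of c m] by auto
  next
    case False
    then obtain m where m: "e = - int m" by (metis neg_int_cases not_le)
    have "1 - qconst c * qvar powi e = (- (qconst c * inverse (qvar ^ m))) * (1 - qconst (inverse c) * qvar ^ m)"
      unfolding qconst_inverse using \<open>c \<noteq> 0\<close> by (simp add: m power_int_minus field_simps)
    moreover have "unit_mod (cyclo_poly n) (1 - qconst (inverse c) * qvar ^ m)"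
      using c m by (intro unit_pos) (auto simp: power_inverse)
    moreover have "unit_mod (cyclo_poly n) (- (qconst c * inverse (qvar ^ m)))"
      using \<open>c \<noteq> 0\<close> \<open>0 < n\<close> cyclo_poly_dvd_unity_poly
      by (intro unit_mod_uminus unit_mod_mult unit_mod_qconst unit_mod_inverse unit_mod_power unit_mod_qvar) auto
    ultimately show ?thesis by (metis unit_mod_mult)
  qed
qed

section \<open>The terms of the series\<close>

definition qratio :: "'a::field \<Rightarrow> nat \<Rightarrow> 'a poly fract" where
  "qratio c k = qpoch (qconst c / qvar) (qvar ^ 2) k / qpoch (qvar ^ 2 / qconst c) (qvar ^ 2) k"

(* For admissible c the factors 1 - q^(2j+2)/c of (q^2/c; q^2)_k, k < n, are units modulo Phi_n;
   c = 1 is allowed because n is odd. *)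
definition admissible :: "nat \<Rightarrow> 'a::field \<Rightarrow> bool" where
  "admissible n c \<longleftrightarrow> c \<noteq> 0 \<and> (c ^ n \<noteq> 1 \<or> c = 1)"

lemma qpoch_qconst_div_qvar:
  fixes c :: "'a::field"
  shows "qpoch (qconst c / qvar) (qvar ^ 2) k = (\<Prod>j<k. 1 - qconst c * qvar powi (2 * int j - 1))"
proof -
  have "qvar powi (int m - 1) = (qvar ^ m / qvar :: 'a poly fract)" for m
    using power_int_diff[of qvar "int m" 1] by simp
  from this[of "2 * j" for j] have "qvar powi (2 * int j - 1) = (qvar ^ 2) ^ j / (qvar :: 'a poly fract)" for j
    by (simp add: power_mult)
  then show ?thesis by (simp add: qpoch_def)
qed

lemma qpoch_qvar_square_div_qconst:
  fixes c :: "'a::field"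
  shows "qpoch (qvar ^ 2 / qconst c) (qvar ^ 2) k = (\<Prod>j<k. 1 - qconst (inverse c) * qvar powi (2 * int j + 2))"
proof -
  have "qvar powi (2 * int j + 2) = (qvar ^ (2 * j + 2) :: 'a poly fract)" for j
    by (metis power_int_of_nat of_nat_add of_nat_mult of_nat_numeral)
  then have "qvar powi (2 * int j + 2) = (qvar ^ 2) ^ j * (qvar ^ 2 :: 'a poly fract)" for j
    by (simp only: power_add power_mult)
  then show ?thesis
    by (simp only: qpoch_def qconst_inverse divide_inverse mult_ac)
qed

lemma qint_uminus:
  assumes "q \<noteq> 0"
  shows "qint q (- m) = - (q powi (- m)) * qint q m"
proof -
  have "q powi (- m) * q powi m = 1" using assms by (simp add: power_int_minus)
  then have "1 - q powi (- m) = - (q powi (- m)) * (1 - q powi m)" by (simp add: algebra_simps)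
  then show ?thesis by (simp add: qint_def)
qed

lemma power_int_sum:
  fixes x :: "'a::field"
  assumes "x \<noteq> 0"
  shows "x powi (\<Sum>j\<in>S. f j) = (\<Prod>j\<in>S. x powi f j)"
  by (induction S rule: infinite_finite_induct) (simp_all add: power_int_add assms)

lemma double_sum_atLeastLessThan_int:
  "2 * (\<Sum>j\<in>{k..<k + m}. int j) = int m * (2 * int k + int m - 1)"
proof (induction m)
  case (Suc m)
  have "{k..<k + Suc m} = insert (k + m) {k..<k + m}" by auto
  with Suc show ?case by (simp add: algebra_simps)
qed simp

lemma admissible_inverse: "admissible n c \<Longrightarrow> admissible n (inverse (c :: 'a::field))"
  by (auto simp: admissible_def power_inverse)

definition summand_params :: "'a::field \<Rightarrow> 'a \<Rightarrow> 'a \<Rightarrow> 'a \<Rightarrow> 'a list" where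
  "summand_params a b c d = [a, inverse a, inverse b, c, d, 1]"

definition summand :: "'a::field \<Rightarrow> 'a \<Rightarrow> 'a \<Rightarrow> 'a \<Rightarrow> nat \<Rightarrow> 'a poly fract" where
  "summand a b c d k = qint qvar (4 * int k - 1) * (\<Prod>i<6. qratio (summand_params a b c d ! i) k) *
     (qconst b * qvar ^ 7 / (qconst c * qconst d)) ^ k"

lemma prod_summand_params:
  "(\<Prod>i<6. f (summand_params a b c d ! i)) =
    f a * f (inverse a) * f (inverse b) * f c * f d * f 1"
  by (simp add: summand_params_def numeral_eq_Suc lessThan_Suc_eq_insert_0 prod.reindex mult_ac)

context
  fixes n mid :: nat
  assumes n_gt_1: "1 < n" and two_mid: "2 * mid = n + 1"
begin

lemma odd_n: "odd n"
  using two_mid by presburger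

lemma mid_less: "mid < n"
  using n_gt_1 two_mid by linarith

lemma cyclo_poly_dvd: "cyclo_poly n dvd (unity_poly n :: 'a::comm_ring_1 poly)"
  using n_gt_1 by (intro cyclo_poly_dvd_unity_poly) simp

lemma integral_mod_qvar_powi: "integral_mod (cyclo_poly n) (qvar powi e :: 'a::field poly fract)"
  using n_gt_1 by (intro integral_mod_qvar_power_int[OF cyclo_poly_dvd]) simp

lemma unit_mod_qvar_cyclo_poly: "unit_mod (cyclo_poly n) (qvar :: 'a::field poly fract)"
  using n_gt_1 by (intro unit_mod_qvar[OF cyclo_poly_dvd]) simp

lemma cong_rf_qvar_powi:
  "int n dvd a - b \<Longrightarrow> cong_rf (qvar powi a) (qvar powi b :: 'a::field poly fract) (cyclo_poly n)"
  using n_gt_1 by (intro cong_rf_qvar_power_int[OF cyclo_poly_dvd]) simp_all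

lemma unit_mod_one_minus_qvar: "unit_mod (cyclo_poly n) (1 - qvar :: 'a::field_char_0 poly fract)"
  using unit_mod_one_minus_qvar_power[of n 1] n_gt_1 by simp

lemma integral_mod_qint: "integral_mod (cyclo_poly n) (qint qvar e :: 'a::field_char_0 poly fract)"
  unfolding qint_def
  by (intro integral_mod_divide integral_mod_diff integral_mod_1 integral_mod_qvar_powi unit_mod_one_minus_qvar)

lemma cong_rf_qint:
  assumes "int n dvd a - b"
  shows "cong_rf (qint qvar a) (qint qvar b :: 'a::field_char_0 poly fract) (cyclo_poly n)"
proof -
  have "cong_rf (1 - qvar powi a) (1 - qvar powi b :: 'a poly fract) (cyclo_poly n)"
    using cong_rf_qvar_powi[OF assms] by (intro cong_rf_diff cong_rf_refl)
  then have "cong_rf ((1 - qvar powi a) * inverse (1 - qvar))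
      ((1 - qvar powi b) * inverse (1 - qvar :: 'a poly fract)) (cyclo_poly n)"
    by (intro cong_rf_mult cong_rf_refl integral_mod_diff integral_mod_1 integral_mod_qvar_powi
        unit_mod_imp_integral_inverse unit_mod_one_minus_qvar)
  then show ?thesis by (simp add: qint_def divide_inverse)
qed

lemma cong_rf_qint_reflect:
  assumes "k \<le> mid"
  shows "cong_rf (qint qvar (4 * int (mid - k) - 1))
    (- (qvar powi (1 - 4 * int k)) * qint qvar (4 * int k - 1) :: 'a::field_char_0 poly fract) (cyclo_poly n)"
proof -
  have "4 * int (mid - k) - 1 - (- (4 * int k - 1)) = int n * 2"
    using assms two_mid by (simp add: of_nat_diff)
  then have "int n dvd 4 * int (mid - k) - 1 - (- (4 * int k - 1))" by (metis dvd_triv_left)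
  then have "cong_rf (qint qvar (4 * int (mid - k) - 1)) (qint qvar (- (4 * int k - 1)) :: 'a poly fract)
      (cyclo_poly n)"
    by (rule cong_rf_qint)
  then show ?thesis using qint_uminus[of "qvar :: 'a poly fract" "4 * int k - 1"] by simp
qed

lemma unit_mod_qpoch_factor:
  fixes c :: "'a::field_char_0"
  assumes "admissible n c" "j + 1 < n"
  shows "unit_mod (cyclo_poly n) (1 - qconst (inverse c) * qvar powi (2 * int j + 2))"
proof (rule unit_mod_one_minus_qconst_qvar_power_int)
  show "0 < n" "inverse c \<noteq> 0" using n_gt_1 assms(1) by (auto simp: admissible_def)
  have "\<not> n dvd 2 * (j + 1)"
  proof
    assume "n dvd 2 * (j + 1)"
    moreover have "coprime n 2" using odd_n by (simp add: coprime_commute)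
    ultimately have "n dvd j + 1" using coprime_dvd_mult_right_iff by blast
    with assms(2) show False by (auto dest: dvd_imp_le)
  qed
  then have "\<not> int n dvd 2 * int j + 2"
    by (metis int_dvd_int_iff of_nat_add of_nat_mult of_nat_numeral of_nat_1 distrib_left mult.right_neutral)
  then show "inverse c ^ n \<noteq> 1 \<or> inverse c = 1 \<and> \<not> int n dvd 2 * int j + 2"
    using assms(1) by (auto simp: admissible_def power_inverse)
qed

lemma unit_mod_qpoch_qvar_square_div_qconst:
  fixes c :: "'a::field_char_0"
  assumes "admissible n c" "k < n"
  shows "unit_mod (cyclo_poly n) (qpoch (qvar ^ 2 / qconst c) (qvar ^ 2) k)"
  unfolding qpoch_qvar_square_div_qconst using assms
  by (intro unit_mod_prod unit_mod_qpoch_factor) auto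

lemma integral_mod_qpoch_qconst_div_qvar:
  "integral_mod (cyclo_poly n) (qpoch (qconst c / qvar) (qvar ^ 2) k :: 'a::field poly fract)"
  unfolding qpoch_qconst_div_qvar
  by (intro integral_mod_prod integral_mod_diff integral_mod_1 integral_mod_mult integral_mod_qconst
      integral_mod_qvar_powi)

lemma integral_mod_qratio:
  fixes c :: "'a::field_char_0"
  assumes "admissible n c" "k < n"
  shows "integral_mod (cyclo_poly n) (qratio c k)"
  unfolding qratio_def using assms
  by (intro integral_mod_divide integral_mod_qpoch_qconst_div_qvar unit_mod_qpoch_qvar_square_div_qconst)

lemma cong_rf_qratio_factor_reflect:
  fixes c :: "'a::field"
  assumes "c \<noteq> 0" "j < mid"
  shows "cong_rf (1 - qconst c * qvar powi (2 * int (mid - 1 - j) - 1))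
    ((- qconst c * qvar powi (- 2 - 2 * int j)) * (1 - qconst (inverse c) * qvar powi (2 * int j + 2)))
    (cyclo_poly n)"
proof -
  have "2 * int (mid - 1 - j) - 1 - (- 2 - 2 * int j) = int n"
    using assms(2) two_mid by (auto simp: of_nat_diff)
  then have "int n dvd 2 * int (mid - 1 - j) - 1 - (- 2 - 2 * int j)"
    by (metis dvd_refl)
  then have "cong_rf (1 - qconst c * qvar powi (2 * int (mid - 1 - j) - 1))
      (1 - qconst c * qvar powi (- 2 - 2 * int j)) (cyclo_poly n)"
    by (intro cong_rf_diff cong_rf_mult cong_rf_refl cong_rf_qvar_powi integral_mod_qconst
        integral_mod_qvar_powi)
  moreover have "qvar powi (- 2 - 2 * int j) * qvar powi (2 * int j + 2) = (1 :: 'a poly fract)"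
    by (simp flip: power_int_add)
  then have "1 - qconst c * qvar powi (- 2 - 2 * int j) =
      (- qconst c * qvar powi (- 2 - 2 * int j)) * (1 - qconst (inverse c) * qvar powi (2 * int j + 2))"
    using assms(1) by (simp add: qconst_inverse algebra_simps)
  ultimately show ?thesis by simp
qed

(* Numerator factor mid - 1 - j of qratio c (mid - k) is matched with denominator factor j, for
   j in {k..<mid - k}; those denominator factors then cancel. *)
lemma cong_rf_qratio_reflect:
  fixes c :: "'a::field_char_0"
  assumes c: "admissible n c" and k: "k \<le> mid - k"
  shows "cong_rf (qratio c (mid - k))
    (qratio c k * (\<Prod>j\<in>{k..<mid - k}. - qconst c * qvar powi (- 2 - 2 * int j))) (cyclo_poly n)"
proof -
  define X where "X j = 1 - qconst c * qvar powi (2 * int j - 1)" for j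
  define Y where "Y j = 1 - qconst (inverse c) * qvar powi (2 * int j + 2)" for j
  define W where "W j = - qconst c * qvar powi (- 2 - 2 * int j)" for j
  define I where "I = {k..<mid - k}"
  have "c \<noteq> 0" using c by (simp add: admissible_def)
  have split: "(\<Prod>j<mid - k. f j) = (\<Prod>j<k. f j) * (\<Prod>j\<in>I. f j)"
    for f :: "nat \<Rightarrow> 'a poly fract"
    unfolding I_def lessThan_atLeast0 using k by (simp add: prod.atLeastLessThan_concat)
  have qratio_XY: "qratio c m = (\<Prod>j<m. X j) / (\<Prod>j<m. Y j)" for m
    by (simp add: qratio_def qpoch_qconst_div_qvar qpoch_qvar_square_div_qconst X_def Y_def)
  have unit_Y: "unit_mod (cyclo_poly n) (Y j)" if "j \<in> I" for j
    using that mid_less c by (auto simp: Y_def I_def intro!: unit_mod_qpoch_factor)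
  have integral_W: "integral_mod (cyclo_poly n) (W j)" for j
    unfolding W_def by (intro integral_mod_mult integral_mod_uminus integral_mod_qconst integral_mod_qvar_powi)
  have X_reflect: "cong_rf (X (mid - 1 - j)) (W j * Y j) (cyclo_poly n)" if "j \<in> I" for j
    using that \<open>c \<noteq> 0\<close> unfolding X_def W_def Y_def I_def by (intro cong_rf_qratio_factor_reflect) auto
  have integral_ratio: "integral_mod (cyclo_poly n) (qratio c k / (\<Prod>j\<in>I. Y j))"
    using c k mid_less unit_Y by (intro integral_mod_divide integral_mod_qratio unit_mod_prod) auto
  have integral_WY: "integral_mod (cyclo_poly n) (\<Prod>j\<in>I. W j * Y j)"
    using integral_W unit_Y by (intro integral_mod_prod integral_mod_mult) (auto intro: unit_mod_imp_integral)
  have "(\<Prod>j\<in>I. X j) = (\<Prod>j\<in>I. X (mid - 1 - j))"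
    by (rule prod.reindex_bij_witness[of I "\<lambda>j. mid - 1 - j" "\<lambda>j. mid - 1 - j"]) (auto simp: I_def)
  also have "cong_rf \<dots> (\<Prod>j\<in>I. W j * Y j) (cyclo_poly n)"
    using X_reflect unit_Y integral_W by (intro cong_rf_prod) (auto intro: integral_mod_mult unit_mod_imp_integral)
  finally have "cong_rf (qratio c k / (\<Prod>j\<in>I. Y j) * (\<Prod>j\<in>I. X j))
      (qratio c k / (\<Prod>j\<in>I. Y j) * (\<Prod>j\<in>I. W j * Y j)) (cyclo_poly n)"
    using integral_ratio integral_WY by (rule cong_rf_mult[OF cong_rf_refl])
  moreover have "qratio c k / (\<Prod>j\<in>I. Y j) * (\<Prod>j\<in>I. X j) = qratio c (mid - k)"
    unfolding qratio_XY split[of X] split[of Y] by (simp add: divide_inverse mult_ac)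
  moreover have "qratio c k / (\<Prod>j\<in>I. Y j) * (\<Prod>j\<in>I. W j * Y j) = qratio c k * (\<Prod>j\<in>I. W j)"
    using unit_mod_prod[of I "cyclo_poly n" Y] unit_Y by (auto simp: prod.distrib unit_mod_def)
  ultimately show ?thesis by (simp add: I_def W_def)
qed

lemma cong_rf_qratio_one_zero:
  assumes "mid < k" "k < n"
  shows "cong_rf (qratio 1 k) (0 :: 'a::field_char_0 poly fract) (cyclo_poly n)"
proof -
  have "cong_rf (qvar ^ n) (1 :: 'a poly fract) (cyclo_poly n)"
    using cong_rf_qvar_powi[of "int n" 0] by simp
  then have "cong_rf (1 - qvar ^ n) (1 - 1 :: 'a poly fract) (cyclo_poly n)"
    by (rule cong_rf_diff[OF cong_rf_refl])
  moreover have "2 * int mid - 1 = int n"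
    using two_mid by linarith
  ultimately have "cong_rf (1 - qconst 1 * qvar powi (2 * int mid - 1)) (0 :: 'a poly fract) (cyclo_poly n)"
    by simp
  then have numerator: "cong_rf (qpoch (qconst 1 / qvar) (qvar ^ 2) k) (0 :: 'a poly fract) (cyclo_poly n)"
    unfolding qpoch_qconst_div_qvar using assms(1)
    by (subst prod.remove[of _ mid]) (auto intro!: cong_rf_zero_mult integral_mod_prod integral_mod_diff
        integral_mod_mult integral_mod_qconst integral_mod_qvar_powi)
  have "unit_mod (cyclo_poly n) (qpoch (qvar ^ 2 / qconst 1) (qvar ^ 2) k :: 'a poly fract)"
    using assms(2) by (intro unit_mod_qpoch_qvar_square_div_qconst) (simp_all add: admissible_def)
  with numerator show ?thesis
    unfolding qratio_def divide_inverse by (intro cong_rf_zero_mult unit_mod_imp_integral_inverse)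
qed

lemma reflection_exponent_dvd:
  assumes k: "k \<le> mid - k"
  shows "int n dvd 1 - 4 * int k + (\<Sum>j\<in>{k..<mid - k}. - 5 - 12 * int j)"
proof -
  define m where "m = mid - 2 * k"
  have I_eq: "{k..<mid - k} = {k..<k + m}" using k by (simp add: m_def)
  have "2 * (\<Sum>j\<in>{k..<k + m}. int j) = int m * (2 * int k + int m - 1)"
    by (rule double_sum_atLeastLessThan_int)
  moreover have "(\<Sum>j\<in>{k..<k + m}. - 5 - 12 * int j) = - 5 * int m - 12 * (\<Sum>j\<in>{k..<k + m}. int j)"
    by (simp add: sum_subtractf sum_distrib_left)
  ultimately have S_eq: "(\<Sum>j\<in>{k..<k + m}. - 5 - 12 * int j) =
      - 5 * int m - 6 * (int m * (2 * int k + int m - 1))"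
    by linarith
  have n_eq: "int n = 2 * int m + 4 * int k - 1"
    using k two_mid unfolding m_def by linarith
  have "1 - 4 * int k + (\<Sum>j\<in>{k..<k + m}. - 5 - 12 * int j) = int n * (- 3 * int m - 1)"
    unfolding S_eq n_eq by (simp add: algebra_simps)
  then show ?thesis unfolding I_eq by simp
qed

context
  fixes a b c d :: "'a::field_char_0"
  assumes admissible_params: "admissible n a" "admissible n b" "admissible n c" "admissible n d"
begin

lemma admissible_summand_params:
  assumes "i < 6"
  shows "admissible n (summand_params a b c d ! i)"
proof -
  have "admissible n (1 :: 'a)" by (simp add: admissible_def)
  then have "\<forall>x \<in> set (summand_params a b c d). admissible n x"
    using admissible_params by (simp add: summand_params_def admissible_inverse)
  moreover have "summand_params a b c d ! i \<in> set (summand_params a b c d)"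
    using assms by (intro nth_mem) (simp add: summand_params_def)
  ultimately show ?thesis by blast
qed

lemma params_nonzero: "a \<noteq> 0" "b \<noteq> 0" "c \<noteq> 0" "d \<noteq> 0"
  using admissible_params by (simp_all add: admissible_def)

lemma integral_mod_summand_ratio:
  "integral_mod (cyclo_poly n) (qconst b * qvar ^ 7 / (qconst c * qconst d))"
  using params_nonzero
  by (intro integral_mod_divide integral_mod_mult integral_mod_qconst integral_mod_power unit_mod_mult
      unit_mod_qconst unit_mod_imp_integral[OF unit_mod_qvar_cyclo_poly])


lemma reflection_weight:
  "(\<Prod>i<6. \<Prod>j\<in>I. - qconst (summand_params a b c d ! i) * qvar powi (- 2 - 2 * int j)) *
     (qconst b * qvar ^ 7 / (qconst c * qconst d)) ^ card I = qvar powi (\<Sum>j\<in>I. - 5 - 12 * int j)"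
proof -
  define z where "z = qconst b * qvar ^ 7 / (qconst c * qconst d)"
  have weight_j: "(\<Prod>i<6. - qconst (summand_params a b c d ! i) * qvar powi e) * z = qvar powi (7 + 6 * e)"
    for e :: int
  proof -
    define t where "t = (qvar powi e :: 'a poly fract)"
    have "(\<Prod>i<6. - qconst (summand_params a b c d ! i) * t) =
        (- qconst a * t) * (- inverse (qconst a) * t) * (- inverse (qconst b) * t) * (- qconst c * t) *
        (- qconst d * t) * (- 1 * t)"
      unfolding prod_summand_params[of "\<lambda>x. - qconst x * t"] qconst_inverse by simp
    also have "\<dots> = (qconst a * inverse (qconst a)) * (qconst c * qconst d * inverse (qconst b)) * t ^ 6"
      by (simp add: eval_nat_numeral algebra_simps)
    finally have "(\<Prod>i<6. - qconst (summand_params a b c d ! i) * qvar powi e) * z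
        = qvar ^ 7 * (qvar powi e) ^ 6"
      using params_nonzero by (simp add: z_def t_def field_simps)
    also have "\<dots> = qvar powi 7 * qvar powi (e * 6)"
      by (simp add: power_int_mult)
    also have "\<dots> = qvar powi (7 + 6 * e)"
      by (simp add: power_int_add mult.commute)
    finally show ?thesis .
  qed
  have "(\<Prod>i<6. \<Prod>j\<in>I. - qconst (summand_params a b c d ! i) * qvar powi (- 2 - 2 * int j)) * z ^ card I
      = (\<Prod>j\<in>I. (\<Prod>i<6. - qconst (summand_params a b c d ! i) * qvar powi (- 2 - 2 * int j)) * z)"
    by (simp add: prod.distrib prod.swap[of _ I "{..<6}"])
  also have "\<dots> = (\<Prod>j\<in>I. qvar powi (- 5 - 12 * int j))"
  proof (intro prod.cong refl)
    fix j
    have "7 + 6 * (- 2 - 2 * int j) = - 5 - 12 * int j" by simp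
    then show "(\<Prod>i<6. - qconst (summand_params a b c d ! i) * qvar powi (- 2 - 2 * int j)) * z =
        qvar powi (- 5 - 12 * int j)"
      using weight_j[of "- 2 - 2 * int j"] by (simp only:)
  qed
  also have "\<dots> = qvar powi (\<Sum>j\<in>I. - 5 - 12 * int j)"
    by (simp add: power_int_sum)
  finally show ?thesis by (simp add: z_def)
qed

lemma integral_mod_prod_qratio_params:
  "k < n \<Longrightarrow> integral_mod (cyclo_poly n) (\<Prod>i<6. qratio (summand_params a b c d ! i) k)"
  by (intro integral_mod_prod integral_mod_qratio admissible_summand_params) auto

lemma integral_mod_summand: "k < n \<Longrightarrow> integral_mod (cyclo_poly n) (summand a b c d k)"
  unfolding summand_def
  by (intro integral_mod_mult integral_mod_qint integral_mod_prod_qratio_params integral_mod_power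
      integral_mod_summand_ratio)

lemma cong_rf_prod_qratio_params_reflect:
  assumes k: "k \<le> mid - k"
  shows "cong_rf (\<Prod>i<6. qratio (summand_params a b c d ! i) (mid - k))
    ((\<Prod>i<6. qratio (summand_params a b c d ! i) k) *
     (\<Prod>i<6. \<Prod>j\<in>{k..<mid - k}. - qconst (summand_params a b c d ! i) * qvar powi (- 2 - 2 * int j)))
    (cyclo_poly n)"
proof -
  define W where
    "W i = (\<Prod>j\<in>{k..<mid - k}. - qconst (summand_params a b c d ! i) * qvar powi (- 2 - 2 * int j))"
    for i
  have "k < n" using k mid_less by linarith
  have "cong_rf (\<Prod>i<6. qratio (summand_params a b c d ! i) (mid - k))
      (\<Prod>i<6. qratio (summand_params a b c d ! i) k * W i) (cyclo_poly n)"
  proof (rule cong_rf_prod)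
    fix i :: nat assume "i \<in> {..<6}"
    then show "cong_rf (qratio (summand_params a b c d ! i) (mid - k))
        (qratio (summand_params a b c d ! i) k * W i) (cyclo_poly n)"
      unfolding W_def using k by (intro cong_rf_qratio_reflect admissible_summand_params) simp_all
  next
    fix i :: nat assume "i \<in> {..<6}"
    then show "integral_mod (cyclo_poly n) (qratio (summand_params a b c d ! i) k * W i)"
      unfolding W_def using \<open>k < n\<close>
      by (intro integral_mod_mult integral_mod_qratio admissible_summand_params integral_mod_prod
          integral_mod_uminus integral_mod_qconst integral_mod_qvar_powi) simp_all
  qed
  then show ?thesis by (simp add: W_def prod.distrib)
qed

lemma cong_rf_summand_reflect:
  assumes k: "k \<le> mid - k"
  shows "cong_rf (summand a b c d (mid - k)) (- summand a b c d k) (cyclo_poly n)"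
proof -
  define E where "E l = (\<Prod>i<6. qratio (summand_params a b c d ! i) l)" for l
  define W where "W = (\<Prod>i<6. \<Prod>j\<in>{k..<mid - k}.
    - qconst (summand_params a b c d ! i) * qvar powi (- 2 - 2 * int j))"
  define z where "z = qconst b * qvar ^ 7 / (qconst c * qconst d)"
  define S where "S = (\<Sum>j\<in>{k..<mid - k}. - 5 - 12 * int j)"
  have "k < n" "mid - k < n" using k mid_less by linarith+
  have summand_eq: "summand a b c d l = qint qvar (4 * int l - 1) * E l * z ^ l" for l
    by (simp add: summand_def E_def z_def)
  have "integral_mod (cyclo_poly n) W"
    unfolding W_def
    by (intro integral_mod_prod integral_mod_mult integral_mod_uminus integral_mod_qconst integral_mod_qvar_powi)
  then have "cong_rf (qint qvar (4 * int (mid - k) - 1) * E (mid - k))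
      ((- (qvar powi (1 - 4 * int k)) * qint qvar (4 * int k - 1)) * (E k * W)) (cyclo_poly n)"
    using k \<open>k < n\<close> \<open>mid - k < n\<close> cong_rf_prod_qratio_params_reflect[OF k]
    unfolding E_def W_def
    by (intro cong_rf_mult cong_rf_qint_reflect integral_mod_qint integral_mod_mult
        integral_mod_prod_qratio_params) auto
  then have "cong_rf (summand a b c d (mid - k))
      ((- (qvar powi (1 - 4 * int k)) * qint qvar (4 * int k - 1)) * (E k * W) * z ^ (mid - k)) (cyclo_poly n)"
    unfolding summand_eq using \<open>mid - k < n\<close> integral_mod_summand_ratio
    by (intro cong_rf_mult[OF _ cong_rf_refl] integral_mod_mult integral_mod_qint integral_mod_power)
      (simp_all add: E_def z_def integral_mod_prod_qratio_params)
  also have "z ^ (mid - k) = z ^ k * z ^ card {k..<mid - k}"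
    using k by (simp flip: power_add)
  then have "(- (qvar powi (1 - 4 * int k)) * qint qvar (4 * int k - 1)) * (E k * W) * z ^ (mid - k)
      = - summand a b c d k * (qvar powi (1 - 4 * int k) * (W * z ^ card {k..<mid - k}))"
    by (simp add: summand_eq algebra_simps)
  also have "\<dots> = - summand a b c d k * qvar powi (1 - 4 * int k + S)"
    using reflection_weight[of "{k..<mid - k}"] by (simp add: W_def z_def S_def power_int_add)
  also have "cong_rf \<dots> (- summand a b c d k * qvar powi 0) (cyclo_poly n)"
    using \<open>k < n\<close> reflection_exponent_dvd[OF k] unfolding S_def
    by (intro cong_rf_mult cong_rf_refl cong_rf_qvar_powi integral_mod_uminus integral_mod_summand
        integral_mod_qvar_powi) simp_all
  finally show ?thesis by simp
qed

lemma cong_rf_sum_summand_upto_mid: "cong_rf (\<Sum>k=0..mid. summand a b c d k) 0 (cyclo_poly n)"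
proof -
  define T where "T = (\<Sum>k=0..mid. summand a b c d k)"
  have "(\<Sum>k=0..mid. summand a b c d (mid - k)) = T"
    unfolding T_def by (rule sum.reindex_bij_witness[of _ "\<lambda>k. mid - k" "\<lambda>k. mid - k"]) auto
  moreover have "cong_rf (\<Sum>k=0..mid. summand a b c d (mid - k)) (\<Sum>k=0..mid. - summand a b c d k)
      (cyclo_poly n)"
  proof (rule cong_rf_sum)
    fix k assume "k \<in> {0..mid}"
    show "cong_rf (summand a b c d (mid - k)) (- summand a b c d k) (cyclo_poly n)"
    proof (cases "k \<le> mid - k")
      case True
      then show ?thesis by (rule cong_rf_summand_reflect)
    next
      case False
      then have "cong_rf (summand a b c d (mid - (mid - k))) (- summand a b c d (mid - k)) (cyclo_poly n)"
        by (intro cong_rf_summand_reflect) simp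
      then have "cong_rf (- summand a b c d k) (summand a b c d (mid - k)) (cyclo_poly n)"
        using \<open>k \<in> {0..mid}\<close> cong_rf_uminus by fastforce
      then show ?thesis by (rule cong_rf_sym)
    qed
  qed
  ultimately have "cong_rf T (- T) (cyclo_poly n)"
    by (simp add: T_def sum_negf)
  moreover have "qconst (2 :: 'a) = 2"
    unfolding qconst_def by (metis numeral_poly one_add_one to_fract_add to_fract_1)
  then have "integral_mod (cyclo_poly n) (inverse 2 :: 'a poly fract)"
    using unit_mod_qconst[of "2 :: 'a" "cyclo_poly n"] unit_mod_imp_integral_inverse by fastforce
  ultimately have "cong_rf ((T - - T) * inverse 2) 0 (cyclo_poly n)"
    using cong_rf_zero_mult cong_rf_iff_diff by blast
  then show ?thesis by (simp add: T_def)
qed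

lemma cong_rf_summand_zero:
  assumes "mid < k" "k < n"
  shows "cong_rf (summand a b c d k) 0 (cyclo_poly n)"
proof -
  have summand_eq: "summand a b c d k = qratio 1 k * (qint qvar (4 * int k - 1) *
      (qratio a k * qratio (inverse a) k * qratio (inverse b) k * qratio c k * qratio d k) *
      (qconst b * qvar ^ 7 / (qconst c * qconst d)) ^ k)"
    by (simp add: summand_def prod_summand_params[of "\<lambda>x. qratio x k"] mult_ac)
  have "integral_mod (cyclo_poly n) (qint qvar (4 * int k - 1) *
      (qratio a k * qratio (inverse a) k * qratio (inverse b) k * qratio c k * qratio d k) *
      (qconst b * qvar ^ 7 / (qconst c * qconst d)) ^ k)"
    using assms(2) admissible_params
    by (intro integral_mod_mult integral_mod_qint integral_mod_qratio integral_mod_power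
        integral_mod_summand_ratio) (simp_all add: admissible_inverse)
  from cong_rf_zero_mult[OF cong_rf_qratio_one_zero[OF assms] this] show ?thesis
    unfolding summand_eq by simp
qed

lemma cong_rf_sum_summand:
  assumes "M = mid \<or> M = n - 1"
  shows "cong_rf (\<Sum>k=0..M. summand a b c d k) 0 (cyclo_poly n)"
  using assms
proof
  assume "M = n - 1"
  have "{0..n - 1} = {0..mid} \<union> {Suc mid..n - 1}"
    using mid_less by auto
  then have "(\<Sum>k=0..n - 1. summand a b c d k) =
      (\<Sum>k=0..mid. summand a b c d k) + (\<Sum>k=Suc mid..n - 1. summand a b c d k)"
    by (simp add: sum.union_disjoint)
  moreover have "cong_rf (\<Sum>k=Suc mid..n - 1. summand a b c d k) (\<Sum>k=Suc mid..n - 1. 0) (cyclo_poly n)"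
    using n_gt_1 by (intro cong_rf_sum cong_rf_summand_zero) auto
  ultimately show ?thesis
    using cong_rf_add[OF cong_rf_sum_summand_upto_mid] \<open>M = n - 1\<close> by fastforce
qed (simp add: cong_rf_sum_summand_upto_mid)

end

end

section \<open>Specialisation to Q(a, b, c, d)\<close>

lemma summand_expand:
  "summand a b c d k = qint qvar (4 * int k - 1) *
     (qpoch (qconst a / qvar) (qvar ^ 2) k * qpoch (1 / (qvar * qconst a)) (qvar ^ 2) k *
      qpoch (1 / (qvar * qconst b)) (qvar ^ 2) k * qpoch (qconst c / qvar) (qvar ^ 2) k *
      qpoch (qconst d / qvar) (qvar ^ 2) k * qpoch (1 / qvar) (qvar ^ 2) k) /
     (qpoch (qvar ^ 2 / qconst a) (qvar ^ 2) k * qpoch (qconst a * qvar ^ 2) (qvar ^ 2) k *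
      qpoch (qconst b * qvar ^ 2) (qvar ^ 2) k * qpoch (qvar ^ 2 / qconst c) (qvar ^ 2) k *
      qpoch (qvar ^ 2 / qconst d) (qvar ^ 2) k * qpoch (qvar ^ 2) (qvar ^ 2) k) *
     (qconst b * qvar ^ 7 / (qconst c * qconst d)) ^ k"
proof -
  have inverse_eqs: "inverse x / qvar = 1 / (qvar * x)" "qvar ^ 2 / inverse x = x * qvar ^ 2"
    for x :: "'a poly fract"
    by (simp_all add: divide_inverse mult.commute)
  show ?thesis
    unfolding summand_def prod_summand_params[of "\<lambda>x. qratio x k"]
    unfolding qratio_def qconst_inverse qconst_1 inverse_eqs
    by (simp only: divide_inverse inverse_mult_distrib inverse_1 mult_1_left mult_ac)
qed

lemma var_power_ne_1: "0 < n \<Longrightarrow> [:0, 1:] ^ n \<noteq> (1 :: 'a::idom poly)"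
  by (simp add: monom_altdef [of 1, simplified, symmetric] monom_eq_1_iff)

lemma const_poly_power_ne_1: "p ^ n \<noteq> 1 \<Longrightarrow> [:p:] ^ n \<noteq> (1 :: 'a::comm_semiring_1 poly)"
  by (metis pCons_eq_iff pCons_one poly_const_pow)

lemma to_fract_power_ne_1: "p ^ n \<noteq> 1 \<Longrightarrow> to_fract p ^ n \<noteq> (1 :: 'a::idom fract)"
  by (metis to_fract_1 to_fract_eq_iff to_fract_power)

lemma admissible_indeterminates:
  assumes "0 < n"
  shows "admissible n ind_a" "admissible n ind_b" "admissible n ind_c" "admissible n ind_d"
proof -
  have "ind_a ^ n \<noteq> 1" "ind_b ^ n \<noteq> 1" "ind_c ^ n \<noteq> 1" "ind_d ^ n \<noteq> 1"
    unfolding ind_a_def ind_b_def ind_c_def ind_d_def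
    by (intro to_fract_power_ne_1 const_poly_power_ne_1 var_power_ne_1 assms)+
  then show "admissible n ind_a" "admissible n ind_b" "admissible n ind_c" "admissible n ind_d"
    by (simp_all add: admissible_def ind_a_def ind_b_def ind_c_def ind_d_def)
qed

theorem lemma2p1:
  fixes n M :: nat
  assumes "n > 1" and "odd n"
    and "M = (n + 1) div 2 \<or> M = n - 1"
  shows "cong_rf
    (\<Sum>k=0..M. qint Q (4 * int k - 1) *
       (qpoch (A / Q) (Q^2) k * qpoch (1 / (Q * A)) (Q^2) k * qpoch (1 / (Q * B)) (Q^2) k *
        qpoch (C / Q) (Q^2) k * qpoch (D / Q) (Q^2) k * qpoch (1 / Q) (Q^2) k) /
       (qpoch (Q^2 / A) (Q^2) k * qpoch (A * Q^2) (Q^2) k * qpoch (B * Q^2) (Q^2) k *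
        qpoch (Q^2 / C) (Q^2) k * qpoch (Q^2 / D) (Q^2) k * qpoch (Q^2) (Q^2) k) *
       (B * Q^7 / (C * D)) ^ k)
    0 (map_poly of_int (cyclo n))"
proof -
  have "Q = qvar" "A = qconst ind_a" "B = qconst ind_b" "C = qconst ind_c" "D = qconst ind_d"
    by (simp_all add: Q_def qvar_def A_def B_def C_def D_def qconst_def)
  moreover have "2 * ((n + 1) div 2) = n + 1"
    using \<open>odd n\<close> by simp
  ultimately show ?thesis
    using cong_rf_sum_summand[OF \<open>n > 1\<close> _ admissible_indeterminates assms(3)] \<open>n > 1\<close>
    by (simp add: summand_expand)
qed

end
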